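(* Let $\mathcal{P}=(\mathcal{R},\mathcal{F},\mathcal{D},\mathcal{B})$ be a ground Capacity Logic Program. If $K_1$ and $K_2$ are pairwise incompatible sets of capacity composite choices for $\mathcal{P}$ that are equivalent ($\omega_{K_1}=\omega_{K_2}$), then $\xi_c(K_1)=\xi_c(K_2)$.
   Context: All sets are finite; there are no function symbols. Belief domains: a belief domain $D$ has a finite nonempty frame of discernment $X_D$ and a mass function $\mathit{mass}(D,\cdot):\mathbb{P}(X_D)\to\mathbb{R}$ with $\mathit{mass}(D,\emptyset)=0$, $\mathit{mass}(D,A)\ge 0$, $\sum_{A\subseteq X_D}\mathit{mass}(D,A)=1$. For $A\subseteq X_D$: $\mathit{Belief}(D,A)=\sum_{B\subseteq A}\mathit{mass}(D,B)$, $\mathit{Plaus}(D,A)=1-\mathit{Belief}(D,X_D\setminus A)$. Capacity Logic Program (CaLP): a tuple $\mathcal{P}=(\mathcal{R},\mathcal{F},\mathcal{D},\mathcal{B})$ where $\mathcal{R}$ is a finite set of ground rules, $\mathcal{F}$ a finite set of ground probabilistic facts $p::f$ ($p\in[0,1]$, $f$ a ground atom), $\mathcal{D}$ a finite set of belief domains, and $\mathcal{B}$ the set of all ground belief facts $\mathit{belief}(D,B)$ with $D\in\mathcal{D}$, $B\subseteq X_D$. We write $\mathit{belief}(D,\neg B)$ for $\mathit{belief}(D,X_D\setminus B)$. Canonicalization: for a set $Bel$ of belief facts, $\mathrm{canon}(Bel)=\{\mathit{belief}(D,\bigcap_{\mathit{belief}(D,B_i)\in Bel}B_i)\mid D \text{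 a domain occurring in } Bel\}$; $Bel$ is consistent if $\mathrm{canon}(Bel)$ contains no fact with event $\emptyset$. Belief worlds: a belief world is $w=(\mathcal{R},\mathcal{F}',\mathcal{D},\mathcal{B}')$ with $\mathcal{F}'\subseteq\mathcal{F}$ and $\mathcal{B}'\subseteq\mathcal{B}$ consistent, canonical, and containing exactly one belief fact for every domain in $\mathcal{D}$. $W^{\mathcal{D}}_{\mathcal{P}}$ is the set of belief worlds. Capacity atomic choices: either an atomic Bayesian choice $(f,k)$ with $p::f\in\mathcal{F}$ and $k\in\{0,1\}$, or an atomic belief choice $\mathit{belief}(D,B)$ with $D\in\mathcal{D}$, $B\subseteq X_D$. For a set $\kappa$ of atomic choices, $Bay(\kappa)$ is its set of Bayesian choices and $Bel(\kappa)$ its set of belief choices. $\kappa$ is consistent if $Bay(\kappa)$ contains no pair $(f,0),(f,1)$ and $Bel(\kappa)$ is consistent. A capacity composite choice is a consistent set of capacity atomic choices. Compatible worlds: for a capacity composite choice $\kappa$, $\omega_\kappa$ is the set of belief worlds $(\mathcal{R},\mathcal{F}',\mathcal{D},\mathcal{B}')$ such that $f\in\mathcal{F}'$ for every $(f,1)\in\kappa$, $f\notin\mathcal{F}'$ for every $(f,0)\in\kappa$, and $\mathrm{canon}(Bel(\kappa))\subseteq\mathcal{B}'$. For a set $K$, $\omega_K=\bigcup_{\kappa\in K}\omega_\kappa$. $K_1,K_2$ are equivalent if $\omega_{K_1}=\omega_{K_2}$. Two capacity composite choices are incompatible if their union is not consistent; $K$ is pairwise incompatible if any two distinct elements are incompatible.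 Interval arithmetic: $[a,b]\,\widehat{\times}\,[c,d]=[ac,bd]$, $[a,b]\,\widehat{+}\,[c,d]=[a+c,b+d]$ (nonnegative intervals), with iterated versions $\widehat{\prod},\widehat{\sum}$. Capacity of capacity composite choices: $\rho_c(\kappa)=\prod_{(f,1)\in\kappa}p_f\prod_{(f,0)\in\kappa}(1-p_f)$, where $p_f$ is the probability of $f$ in $\mathcal{F}$. Then $\rho^{Comp}_{\mathcal{B}}(\kappa)=[\rho_c(\kappa),\rho_c(\kappa)]\ \widehat{\times}\ \widehat{\prod}_{\mathit{belief}(D,E)\in\mathrm{canon}(Bel(\kappa))}[\mathit{Belief}(D,E),\mathit{Plaus}(D,E)]$, and for a pairwise incompatible set $K$, $\xi_c(K)=\widehat{\sum}_{\kappa\in K}\rho^{Comp}_{\mathcal{B}}(\kappa)$. *)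

theory Defs
  imports Complex_Main
begin

text \<open>Rules are kept abstract (type 'r); they play no role in
 the capacity semantics of composite choices.  The probabilistic facts p::f are
 represented by the finite set of their atoms together with the probability
 p_f of each atom.\<close>

record ('r, 'f, 'd, 'x) calp =
  rules   :: "'r set"
  pfacts  :: "'f set"
  prob    :: "'f \<Rightarrow> real"
  domains :: "'d set"
  frame   :: "'d \<Rightarrow> 'x set"
  mass    :: "'d \<Rightarrow> 'x set \<Rightarrow> real"

definition belief_domain :: "'x set \<Rightarrow> ('x set \<Rightarrow> real) \<Rightarrow> bool" where
  "belief_domain X m \<longleftrightarrow> finite X \<and> X \<noteq> {} \<and> m {} = 0 \<and>
     (\<forall>A\<subseteq>X. m A \<ge> 0) \<and> (\<Sum>A\<in>Pow X. m A) = 1"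

definition wf_calp :: "('r, 'f, 'd, 'x) calp \<Rightarrow> bool" where
  "wf_calp P \<longleftrightarrow> finite (rules P) \<and> finite (pfacts P) \<and>
     (\<forall>f\<in>pfacts P. 0 \<le> prob P f \<and> prob P f \<le> 1) \<and>
     finite (domains P) \<and>
     (\<forall>D\<in>domains P. belief_domain (frame P D) (mass P D))"

definition Belief :: "('r, 'f, 'd, 'x) calp \<Rightarrow> 'd \<Rightarrow> 'x set \<Rightarrow> real" where
  "Belief P D A = (\<Sum>B\<in>Pow A. mass P D B)"

definition Plaus :: "('r, 'f, 'd, 'x) calp \<Rightarrow> 'd \<Rightarrow> 'x set \<Rightarrow> real" where
  "Plaus P D A = 1 - Belief P D (frame P D - A)"

text \<open>The set \<B> of all ground belief facts belief(D,B), as pairs (D,B).\<close>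
definition belief_facts :: "('r, 'f, 'd, 'x) calp \<Rightarrow> ('d \<times> 'x set) set" where
  "belief_facts P = {(D, B). D \<in> domains P \<and> B \<subseteq> frame P D}"

definition canon :: "('d \<times> 'x set) set \<Rightarrow> ('d \<times> 'x set) set" where
  "canon Bel = {(D, \<Inter>{B. (D, B) \<in> Bel}) | D. \<exists>B. (D, B) \<in> Bel}"

definition bel_consistent :: "('d \<times> 'x set) set \<Rightarrow> bool" where
  "bel_consistent Bel \<longleftrightarrow> (\<forall>D. (D, {}) \<notin> canon Bel)"

definition belief_worlds ::
  "('r, 'f, 'd, 'x) calp \<Rightarrow> ('r set \<times> 'f set \<times> 'd set \<times> ('d \<times> 'x set) set) set" where
  "belief_worlds P = {(R, F', Ds, B'). R = rules P \<and> Ds = domains P \<and>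
      F' \<subseteq> pfacts P \<and> B' \<subseteq> belief_facts P \<and> bel_consistent B' \<and>
      canon B' = B' \<and> (\<forall>D\<in>domains P. \<exists>!B. (D, B) \<in> B')}"

datatype ('f, 'd, 'x) achoice = BayC 'f bool | BelC 'd "'x set"

definition atomic_choice :: "('r, 'f, 'd, 'x) calp \<Rightarrow> ('f, 'd, 'x) achoice \<Rightarrow> bool" where
  "atomic_choice P c = (case c of
      BayC f k \<Rightarrow> f \<in> pfacts P
    | BelC D B \<Rightarrow> D \<in> domains P \<and> B \<subseteq> frame P D)"

definition Bay :: "('f, 'd, 'x) achoice set \<Rightarrow> ('f \<times> bool) set" where
  "Bay \<kappa> = {(f, k). BayC f k \<in> \<kappa>}"

definition Bel :: "('f, 'd, 'x) achoice set \<Rightarrow> ('d \<times> 'x set) set" where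
  "Bel \<kappa> = {(D, B). BelC D B \<in> \<kappa>}"

definition choice_consistent :: "('f, 'd, 'x) achoice set \<Rightarrow> bool" where
  "choice_consistent \<kappa> \<longleftrightarrow>
     (\<forall>f. \<not> ((f, False) \<in> Bay \<kappa> \<and> (f, True) \<in> Bay \<kappa>)) \<and> bel_consistent (Bel \<kappa>)"

definition composite_choice :: "('r, 'f, 'd, 'x) calp \<Rightarrow> ('f, 'd, 'x) achoice set \<Rightarrow> bool" where
  "composite_choice P \<kappa> \<longleftrightarrow> (\<forall>c\<in>\<kappa>. atomic_choice P c) \<and> choice_consistent \<kappa>"

definition omega ::
  "('r, 'f, 'd, 'x) calp \<Rightarrow> ('f, 'd, 'x) achoice set
     \<Rightarrow> ('r set \<times> 'f set \<times> 'd set \<times> ('d \<times> 'x set) set) set" where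
  "omega P \<kappa> = {(R, F', Ds, B') \<in> belief_worlds P.
      (\<forall>f. (f, True) \<in> Bay \<kappa> \<longrightarrow> f \<in> F') \<and>
      (\<forall>f. (f, False) \<in> Bay \<kappa> \<longrightarrow> f \<notin> F') \<and>
      canon (Bel \<kappa>) \<subseteq> B'}"

definition omega_set ::
  "('r, 'f, 'd, 'x) calp \<Rightarrow> ('f, 'd, 'x) achoice set set
     \<Rightarrow> ('r set \<times> 'f set \<times> 'd set \<times> ('d \<times> 'x set) set) set" where
  "omega_set P K = (\<Union>\<kappa>\<in>K. omega P \<kappa>)"

definition incompatible :: "('f, 'd, 'x) achoice set \<Rightarrow> ('f, 'd, 'x) achoice set \<Rightarrow> bool" where
  "incompatible \<kappa>1 \<kappa>2 \<longleftrightarrow> \<not> choice_consistent (\<kappa>1 \<union> \<kappa>2)"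

definition pairwise_incompatible :: "('f, 'd, 'x) achoice set set \<Rightarrow> bool" where
  "pairwise_incompatible K \<longleftrightarrow>
     (\<forall>\<kappa>1\<in>K. \<forall>\<kappa>2\<in>K. \<kappa>1 \<noteq> \<kappa>2 \<longrightarrow> incompatible \<kappa>1 \<kappa>2)"

text \<open>Intervals [a,b] are pairs (a,b); interval arithmetic on nonnegative intervals.\<close>
definition imult :: "real \<times> real \<Rightarrow> real \<times> real \<Rightarrow> real \<times> real" where
  "imult I J = (fst I * fst J, snd I * snd J)"

definition iadd :: "real \<times> real \<Rightarrow> real \<times> real \<Rightarrow> real \<times> real" where
  "iadd I J = (fst I + fst J, snd I + snd J)"

definition iprod :: "('a \<Rightarrow> real \<times> real) \<Rightarrow> 'a set \<Rightarrow> real \<times> real" where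
  "iprod g A = ((\<Prod>a\<in>A. fst (g a)), (\<Prod>a\<in>A. snd (g a)))"

definition isum :: "('a \<Rightarrow> real \<times> real) \<Rightarrow> 'a set \<Rightarrow> real \<times> real" where
  "isum g A = ((\<Sum>a\<in>A. fst (g a)), (\<Sum>a\<in>A. snd (g a)))"

definition rho_c :: "('r, 'f, 'd, 'x) calp \<Rightarrow> ('f, 'd, 'x) achoice set \<Rightarrow> real" where
  "rho_c P \<kappa> = (\<Prod>f\<in>{f. (f, True) \<in> Bay \<kappa>}. prob P f) *
                 (\<Prod>f\<in>{f. (f, False) \<in> Bay \<kappa>}. 1 - prob P f)"

definition rho_comp :: "('r, 'f, 'd, 'x) calp \<Rightarrow> ('f, 'd, 'x) achoice set \<Rightarrow> real \<times> real" where
  "rho_comp P \<kappa> = imult (rho_c P \<kappa>, rho_c P \<kappa>)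
      (iprod (\<lambda>(D, E). (Belief P D E, Plaus P D E)) (canon (Bel \<kappa>)))"

definition xi_c :: "('r, 'f, 'd, 'x) calp \<Rightarrow> ('f, 'd, 'x) achoice set set \<Rightarrow> real \<times> real" where
  "xi_c P K = isum (rho_comp P) K"

end

theory Submission
  imports Defs
begin

text \<open>Writing \<open>\<rho>\<^sub>c \<kappa>\<close> as the total probability of the fact selections \<open>S\<close> agreeing with
  \<open>\<kappa>\<close>, each bound of \<open>\<xi>\<^sub>c K\<close> becomes a sum over \<open>S\<close> of the probability of \<open>S\<close> times a
  sum, over the \<open>\<kappa> \<in> K\<close> agreeing with \<open>S\<close>, of a product over the essential belief facts of
  \<open>\<kappa>\<close> (those whose event is not the whole frame). For fixed \<open>S\<close>, equivalence and pairwise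
  incompatibility force the families of essential belief facts occurring in \<open>K\<^sub>1\<close> and in
  \<open>K\<^sub>2\<close> to coincide, each one carried by a single choice: the world completing
  \<open>\<kappa>\<^sub>1 \<in> K\<^sub>1\<close> with whole frames lies in some \<open>\<kappa>\<^sub>2 \<in> K\<^sub>2\<close>, and the two choices
  have the same essential belief facts.\<close>

lemma prod_bernoulli_marginal:
  fixes p :: "'a \<Rightarrow> 'b::comm_ring_1"
  assumes "finite A" "T \<subseteq> A" "F \<subseteq> A" "T \<inter> F = {}"
  shows "(\<Prod>a\<in>T. p a) * (\<Prod>a\<in>F. 1 - p a) =
    (\<Sum>S\<in>{S\<in>Pow A. T \<subseteq> S \<and> S \<inter> F = {}}. (\<Prod>a\<in>S. p a) * (\<Prod>a\<in>A - S. 1 - p a))"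
proof -
  txt \<open>In the expansion of \<open>\<Prod>a\<in>A. q a + r a\<close> by \<open>prod_add\<close> only the selections
    \<open>S \<supseteq> T\<close> avoiding \<open>F\<close> survive.\<close>
  define q where "q a = (if a \<in> F then 0 else p a)" for a
  define r where "r a = (if a \<in> T then 0 else 1 - p a)" for a
  have "A \<inter> T = T" "A \<inter> - T \<inter> F = F"
    using assms(2-4) by blast+
  then have "(\<Prod>a\<in>T. p a) * (\<Prod>a\<in>F. 1 - p a) =
      (\<Prod>a\<in>A. if a \<in> T then p a else if a \<in> F then 1 - p a else 1)"
    using assms(1) by (simp add: prod.If_cases)
  also have "\<dots> = (\<Prod>a\<in>A. q a + r a)"
    using assms(4) by (intro prod.cong) (auto simp: q_def r_def)
  also have "\<dots> = (\<Sum>S\<in>Pow A. (\<Prod>a\<in>S. q a) * (\<Prod>a\<in>A - S. r a))"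
    by (rule prod_add[OF assms(1)])
  also have "\<dots> = (\<Sum>S\<in>Pow A.
      if T \<subseteq> S \<and> S \<inter> F = {} then (\<Prod>a\<in>S. p a) * (\<Prod>a\<in>A - S. 1 - p a) else 0)"
  proof (intro sum.cong refl)
    fix S assume "S \<in> Pow A"
    then have fin: "finite S" "finite (A - S)"
      using assms(1) finite_subset by auto
    show "(\<Prod>a\<in>S. q a) * (\<Prod>a\<in>A - S. r a) =
        (if T \<subseteq> S \<and> S \<inter> F = {} then (\<Prod>a\<in>S. p a) * (\<Prod>a\<in>A - S. 1 - p a) else 0)"
    proof (cases "T \<subseteq> S \<and> S \<inter> F = {}")
      case True
      then show ?thesis
        by (auto simp: q_def r_def intro!: arg_cong2[where f = "(*)"] prod.cong)
    next
      case False
      then have "(\<exists>a\<in>S. q a = 0) \<or> (\<exists>a\<in>A - S. r a = 0)"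
        using assms(2) by (auto simp: q_def r_def)
      then have "(\<Prod>a\<in>S. q a) * (\<Prod>a\<in>A - S. r a) = 0"
        using fin by (metis mult_zero_left mult_zero_right prod_zero)
      then show ?thesis
        by (simp only: if_not_P[OF False])
    qed
  qed
  also have "\<dots> = (\<Sum>S\<in>{S\<in>Pow A. T \<subseteq> S \<and> S \<inter> F = {}}. (\<Prod>a\<in>S. p a) * (\<Prod>a\<in>A - S. 1 - p a))"
    using assms(1) by (rule sum.inter_filter[symmetric, OF finite_Pow_iff[THEN iffD2]])
  finally show ?thesis .
qed

definition pins :: "('f, 'd, 'x) achoice set \<Rightarrow> 'd \<Rightarrow> bool" where
  "pins \<kappa> D \<longleftrightarrow> (\<exists>B. BelC D B \<in> \<kappa>)"

definition choice_event :: "('f, 'd, 'x) achoice set \<Rightarrow> 'd \<Rightarrow> 'x set" where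
  "choice_event \<kappa> D = \<Inter>{B. BelC D B \<in> \<kappa>}"

definition agrees_with :: "'f set \<Rightarrow> ('f, 'd, 'x) achoice set \<Rightarrow> bool" where
  "agrees_with S \<kappa> \<longleftrightarrow>
     (\<forall>f. BayC f True \<in> \<kappa> \<longrightarrow> f \<in> S) \<and> (\<forall>f. BayC f False \<in> \<kappa> \<longrightarrow> f \<notin> S)"

lemma canon_Bel_eq: "canon (Bel \<kappa>) = {(D, choice_event \<kappa> D) | D. pins \<kappa> D}"
  by (auto simp: canon_def Bel_def pins_def choice_event_def)

lemma choice_consistent_iff:
  "choice_consistent \<kappa> \<longleftrightarrow>
     (\<forall>f. \<not> (BayC f False \<in> \<kappa> \<and> BayC f True \<in> \<kappa>)) \<and>
     (\<forall>D. pins \<kappa> D \<longrightarrow> choice_event \<kappa> D \<noteq> {})"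
  by (auto simp: choice_consistent_def bel_consistent_def canon_Bel_eq Bay_def)

lemma pins_in_domains: "composite_choice P \<kappa> \<Longrightarrow> pins \<kappa> D \<Longrightarrow> D \<in> domains P"
  by (auto simp: composite_choice_def pins_def atomic_choice_def split: achoice.splits)

lemma choice_event_subset_frame:
  "composite_choice P \<kappa> \<Longrightarrow> pins \<kappa> D \<Longrightarrow> choice_event \<kappa> D \<subseteq> frame P D"
  by (force simp: composite_choice_def pins_def atomic_choice_def choice_event_def
      split: achoice.splits)

lemma choice_event_nonempty: "composite_choice P \<kappa> \<Longrightarrow> pins \<kappa> D \<Longrightarrow> choice_event \<kappa> D \<noteq> {}"
  by (auto simp: composite_choice_def choice_consistent_iff)

lemma choice_consistent_UnI:
  assumes "choice_consistent \<kappa>" "choice_consistent \<kappa>'" "agrees_with S \<kappa>" "agrees_with S \<kappa>'"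
    and "\<And>D. pins \<kappa> D \<Longrightarrow> pins \<kappa>' D \<Longrightarrow> choice_event \<kappa> D \<inter> choice_event \<kappa>' D \<noteq> {}"
  shows "choice_consistent (\<kappa> \<union> \<kappa>')"
proof -
  have "pins (\<kappa> \<union> \<kappa>') D \<longleftrightarrow> pins \<kappa> D \<or> pins \<kappa>' D" for D
    by (auto simp: pins_def)
  moreover have "choice_event (\<kappa> \<union> \<kappa>') D = choice_event \<kappa> D \<inter> choice_event \<kappa>' D" for D
    by (auto simp: choice_event_def)
  moreover have "\<not> pins \<kappa> D \<Longrightarrow> choice_event \<kappa> D = UNIV" for \<kappa> :: "('f, 'd, 'x) achoice set" and D
    by (auto simp: choice_event_def pins_def)
  ultimately show ?thesis
    using assms unfolding choice_consistent_iff agrees_with_def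
    by (metis Int_UNIV_left Int_UNIV_right Un_iff)
qed

lemma pairwise_incompatible_eqI:
  assumes "pairwise_incompatible K" and "\<forall>\<kappa>\<in>K. composite_choice P \<kappa>"
    and "\<kappa> \<in> K" "\<kappa>' \<in> K" "agrees_with S \<kappa>" "agrees_with S \<kappa>'"
    and "\<And>D. pins \<kappa> D \<Longrightarrow> pins \<kappa>' D \<Longrightarrow> choice_event \<kappa> D \<inter> choice_event \<kappa>' D \<noteq> {}"
  shows "\<kappa> = \<kappa>'"
proof (rule ccontr)
  assume "\<kappa> \<noteq> \<kappa>'"
  with assms(1,3,4) have "\<not> choice_consistent (\<kappa> \<union> \<kappa>')"
    by (auto simp: pairwise_incompatible_def incompatible_def)
  moreover have "choice_consistent (\<kappa> \<union> \<kappa>')"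
    using assms(2-) by (intro choice_consistent_UnI[of _ _ S]) (auto simp: composite_choice_def)
  ultimately show False by contradiction
qed

definition world ::
  "('r, 'f, 'd, 'x) calp \<Rightarrow> 'f set \<Rightarrow> ('d \<Rightarrow> 'x set)
     \<Rightarrow> 'r set \<times> 'f set \<times> 'd set \<times> ('d \<times> 'x set) set" where
  "world P S ev = (rules P, S, domains P, {(D, ev D) | D. D \<in> domains P})"

definition event_assignment :: "('r, 'f, 'd, 'x) calp \<Rightarrow> ('d \<Rightarrow> 'x set) \<Rightarrow> bool" where
  "event_assignment P ev \<longleftrightarrow> (\<forall>D\<in>domains P. ev D \<subseteq> frame P D \<and> ev D \<noteq> {})"

lemma world_in_omegaI:
  assumes "composite_choice P \<kappa>" "S \<subseteq> pfacts P" "event_assignment P ev" "agrees_with S \<kappa>"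
    and "\<And>D. pins \<kappa> D \<Longrightarrow> ev D = choice_event \<kappa> D"
  shows "world P S ev \<in> omega P \<kappa>"
proof -
  let ?B = "{(D, ev D) | D. D \<in> domains P}"
  have canon: "canon ?B = ?B"
    by (auto simp: canon_def)
  have "?B \<subseteq> belief_facts P" "bel_consistent ?B"
    using assms(3) canon by (auto simp: belief_facts_def bel_consistent_def event_assignment_def)
  then have "world P S ev \<in> belief_worlds P"
    using canon assms(2) by (auto simp: world_def belief_worlds_def)
  moreover have "canon (Bel \<kappa>) \<subseteq> ?B"
    using assms(1,5) pins_in_domains by (auto simp: canon_Bel_eq)
  ultimately show ?thesis
    using assms(4) by (auto simp: omega_def world_def agrees_with_def Bay_def)
qed

lemma world_in_omegaD:
  assumes "world P S ev \<in> omega P \<kappa>"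
  shows "agrees_with S \<kappa>" and "\<And>D. pins \<kappa> D \<Longrightarrow> ev D = choice_event \<kappa> D"
proof -
  have "canon (Bel \<kappa>) \<subseteq> {(D, ev D) | D. D \<in> domains P}" and "agrees_with S \<kappa>"
    using assms by (auto simp: omega_def world_def agrees_with_def Bay_def)
  then show "agrees_with S \<kappa>" and "\<And>D. pins \<kappa> D \<Longrightarrow> ev D = choice_event \<kappa> D"
    by (auto simp: canon_Bel_eq)
qed

lemma frame_nonempty: "wf_calp P \<Longrightarrow> D \<in> domains P \<Longrightarrow> frame P D \<noteq> {}"
  by (auto simp: wf_calp_def belief_domain_def)

lemma event_assignment_reset:
  "wf_calp P \<Longrightarrow> event_assignment P ev \<Longrightarrow> event_assignment P (ev(D := frame P D))"
  by (auto simp: event_assignment_def frame_nonempty)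

definition completed_events ::
  "('r, 'f, 'd, 'x) calp \<Rightarrow> ('f, 'd, 'x) achoice set \<Rightarrow> 'd \<Rightarrow> 'x set" where
  "completed_events P \<kappa> D = (if pins \<kappa> D then choice_event \<kappa> D else frame P D)"

lemma event_assignment_completed_events:
  "wf_calp P \<Longrightarrow> composite_choice P \<kappa> \<Longrightarrow> event_assignment P (completed_events P \<kappa>)"
  by (simp add: event_assignment_def completed_events_def choice_event_subset_frame
      choice_event_nonempty frame_nonempty)

lemma world_completed_events_in_omega:
  "wf_calp P \<Longrightarrow> composite_choice P \<kappa> \<Longrightarrow> S \<subseteq> pfacts P \<Longrightarrow> agrees_with S \<kappa> \<Longrightarrow>
     world P S (completed_events P \<kappa>) \<in> omega P \<kappa>"
  by (rule world_in_omegaI) (auto simp: event_assignment_completed_events completed_events_def)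

text \<open>A domain pinned to its whole frame contributes the factor \<open>Belief = Plaus = 1\<close>.\<close>

definition essential_beliefs ::
  "('r, 'f, 'd, 'x) calp \<Rightarrow> ('f, 'd, 'x) achoice set \<Rightarrow> ('d \<times> 'x set) set" where
  "essential_beliefs P \<kappa> =
     {(D, choice_event \<kappa> D) | D. pins \<kappa> D \<and> choice_event \<kappa> D \<noteq> frame P D}"

lemma cover_essential_beliefs_subset:
  assumes "world P S (completed_events P \<kappa>) \<in> omega P \<kappa>'"
  shows "essential_beliefs P \<kappa>' \<subseteq> essential_beliefs P \<kappa>"
proof
  fix x assume "x \<in> essential_beliefs P \<kappa>'"
  then obtain D where x: "x = (D, choice_event \<kappa>' D)" "pins \<kappa>' D" "choice_event \<kappa>' D \<noteq> frame P D"
    by (auto simp: essential_beliefs_def)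
  then have "completed_events P \<kappa> D = choice_event \<kappa>' D"
    using world_in_omegaD(2)[OF assms] by blast
  with x have "pins \<kappa> D" "choice_event \<kappa> D = choice_event \<kappa>' D"
    by (auto simp: completed_events_def split: if_splits)
  with x show "x \<in> essential_beliefs P \<kappa>"
    by (auto simp: essential_beliefs_def)
qed

lemma essential_beliefs_subset_cover:
  assumes wf: "wf_calp P"
    and K1: "\<forall>\<kappa>\<in>K1. composite_choice P \<kappa>" and K2: "\<forall>\<kappa>\<in>K2. composite_choice P \<kappa>"
    and pw1: "pairwise_incompatible K1" and eq: "omega_set P K1 = omega_set P K2"
    and "\<kappa>1 \<in> K1" "\<kappa>2 \<in> K2" "S \<subseteq> pfacts P" "agrees_with S \<kappa>1"
    and cover: "world P S (completed_events P \<kappa>1) \<in> omega P \<kappa>2"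
  shows "essential_beliefs P \<kappa>1 \<subseteq> essential_beliefs P \<kappa>2"
proof
  have c1: "composite_choice P \<kappa>1" and c2: "composite_choice P \<kappa>2"
    using K1 K2 \<open>\<kappa>1 \<in> K1\<close> \<open>\<kappa>2 \<in> K2\<close> by auto
  fix x assume "x \<in> essential_beliefs P \<kappa>1"
  then obtain D where x: "x = (D, choice_event \<kappa>1 D)" "pins \<kappa>1 D" "choice_event \<kappa>1 D \<noteq> frame P D"
    by (auto simp: essential_beliefs_def)
  txt \<open>Were D free in \<kappa>2, resetting it to the whole frame would give a world of \<kappa>2 whose
    cover in K1 is compatible with \<kappa>1, hence is \<kappa>1 itself; but \<kappa>1 excludes that world.\<close>
  have "pins \<kappa>2 D"
  proof (rule ccontr)
    assume free: "\<not> pins \<kappa>2 D"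
    define ev where "ev = (completed_events P \<kappa>1)(D := frame P D)"
    have "world P S ev \<in> omega P \<kappa>2"
      using world_in_omegaD[OF cover] free wf c1 c2 \<open>S \<subseteq> pfacts P\<close>
      by (intro world_in_omegaI)
        (auto simp: ev_def event_assignment_reset event_assignment_completed_events)
    then obtain \<kappa>1' where "\<kappa>1' \<in> K1" and cover': "world P S ev \<in> omega P \<kappa>1'"
      using eq \<open>\<kappa>2 \<in> K2\<close> by (auto simp: omega_set_def)
    have "\<kappa>1' = \<kappa>1"
    proof (rule pairwise_incompatible_eqI[OF pw1 K1 \<open>\<kappa>1' \<in> K1\<close> \<open>\<kappa>1 \<in> K1\<close>
          world_in_omegaD(1)[OF cover'] \<open>agrees_with S \<kappa>1\<close>])
      fix D' assume "pins \<kappa>1' D'" "pins \<kappa>1 D'"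
      moreover have "choice_event \<kappa>1 D' \<subseteq> ev D'"
        using choice_event_subset_frame[OF c1 \<open>pins \<kappa>1 D'\<close>]
        by (auto simp: ev_def completed_events_def \<open>pins \<kappa>1 D'\<close>)
      ultimately show "choice_event \<kappa>1' D' \<inter> choice_event \<kappa>1 D' \<noteq> {}"
        using world_in_omegaD(2)[OF cover'] choice_event_nonempty[OF c1] by (simp add: Int_absorb1)
    qed
    then have "choice_event \<kappa>1 D = frame P D"
      using world_in_omegaD(2)[OF cover', of D] \<open>pins \<kappa>1 D\<close> by (simp add: ev_def)
    with x show False by simp
  qed
  moreover have "choice_event \<kappa>2 D = choice_event \<kappa>1 D" if "pins \<kappa>2 D"
    using world_in_omegaD(2)[OF cover that] x(2) by (simp add: completed_events_def)
  ultimately show "x \<in> essential_beliefs P \<kappa>2"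
    using x by (auto simp: essential_beliefs_def)
qed

lemma essential_beliefs_matched:
  assumes wf: "wf_calp P"
    and K1: "\<forall>\<kappa>\<in>K1. composite_choice P \<kappa>" and K2: "\<forall>\<kappa>\<in>K2. composite_choice P \<kappa>"
    and pw1: "pairwise_incompatible K1" and eq: "omega_set P K1 = omega_set P K2"
    and "\<kappa>1 \<in> K1" "S \<subseteq> pfacts P" "agrees_with S \<kappa>1"
  shows "\<exists>\<kappa>2\<in>K2. agrees_with S \<kappa>2 \<and> essential_beliefs P \<kappa>2 = essential_beliefs P \<kappa>1"
proof -
  have "world P S (completed_events P \<kappa>1) \<in> omega_set P K1"
    using world_completed_events_in_omega[OF wf] K1 assms(6-) by (auto simp: omega_set_def)
  then obtain \<kappa>2 where "\<kappa>2 \<in> K2" and cover: "world P S (completed_events P \<kappa>1) \<in> omega P \<kappa>2"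
    using eq by (auto simp: omega_set_def)
  then show ?thesis
    using world_in_omegaD(1)[OF cover] cover_essential_beliefs_subset[OF cover]
      essential_beliefs_subset_cover[OF wf K1 K2 pw1 eq assms(6) \<open>\<kappa>2 \<in> K2\<close> assms(7,8) cover]
    by blast
qed

lemma inj_on_essential_beliefs:
  assumes "pairwise_incompatible K" "\<forall>\<kappa>\<in>K. composite_choice P \<kappa>"
  shows "inj_on (essential_beliefs P) {\<kappa>\<in>K. agrees_with S \<kappa>}"
proof (rule inj_onI)
  fix \<kappa> \<kappa>' assume "\<kappa> \<in> {\<kappa>\<in>K. agrees_with S \<kappa>}" "\<kappa>' \<in> {\<kappa>\<in>K. agrees_with S \<kappa>}"
    and ess: "essential_beliefs P \<kappa> = essential_beliefs P \<kappa>'"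
  then have "\<kappa> \<in> K" "\<kappa>' \<in> K" "agrees_with S \<kappa>" "agrees_with S \<kappa>'" by auto
  then have c: "composite_choice P \<kappa>" "composite_choice P \<kappa>'"
    using assms(2) by auto
  show "\<kappa> = \<kappa>'"
  proof (rule pairwise_incompatible_eqI[OF assms \<open>\<kappa> \<in> K\<close> \<open>\<kappa>' \<in> K\<close>
        \<open>agrees_with S \<kappa>\<close> \<open>agrees_with S \<kappa>'\<close>])
    fix D assume p: "pins \<kappa> D" "pins \<kappa>' D"
    show "choice_event \<kappa> D \<inter> choice_event \<kappa>' D \<noteq> {}"
    proof (cases "choice_event \<kappa> D = frame P D \<or> choice_event \<kappa>' D = frame P D")
      case True
      then show ?thesis
        using choice_event_subset_frame[OF c(1) p(1)] choice_event_subset_frame[OF c(2) p(2)]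
          choice_event_nonempty[OF c(1) p(1)] choice_event_nonempty[OF c(2) p(2)]
        by (metis Int_absorb1 Int_absorb2)
    next
      case False
      then have "(D, choice_event \<kappa> D) \<in> essential_beliefs P \<kappa>'"
        using ess p by (auto simp: essential_beliefs_def)
      then have "choice_event \<kappa>' D = choice_event \<kappa> D"
        by (auto simp: essential_beliefs_def)
      then show ?thesis
        using choice_event_nonempty[OF c(1) p(1)] by simp
    qed
  qed
qed

lemma essential_beliefs_image_eq:
  assumes wf: "wf_calp P"
    and K1: "\<forall>\<kappa>\<in>K1. composite_choice P \<kappa>" and K2: "\<forall>\<kappa>\<in>K2. composite_choice P \<kappa>"
    and pw1: "pairwise_incompatible K1" and pw2: "pairwise_incompatible K2"
    and eq: "omega_set P K1 = omega_set P K2" and S: "S \<subseteq> pfacts P"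
  shows "essential_beliefs P ` {\<kappa>\<in>K1. agrees_with S \<kappa>} =
    essential_beliefs P ` {\<kappa>\<in>K2. agrees_with S \<kappa>}"
  using essential_beliefs_matched[OF wf K1 K2 pw1 eq _ S]
    essential_beliefs_matched[OF wf K2 K1 pw2 eq[symmetric] _ S]
  by (auto simp: image_iff) metis+

definition selection_prob :: "('r, 'f, 'd, 'x) calp \<Rightarrow> 'f set \<Rightarrow> real" where
  "selection_prob P S = (\<Prod>f\<in>S. prob P f) * (\<Prod>f\<in>pfacts P - S. 1 - prob P f)"

lemma rho_c_eq_sum_selection_prob:
  assumes "finite (pfacts P)" "composite_choice P \<kappa>"
  shows "rho_c P \<kappa> = (\<Sum>S\<in>{S\<in>Pow (pfacts P). agrees_with S \<kappa>}. selection_prob P S)"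
proof -
  let ?T = "{f. BayC f True \<in> \<kappa>}" and ?F = "{f. BayC f False \<in> \<kappa>}"
  have "?T \<subseteq> pfacts P" "?F \<subseteq> pfacts P" "?T \<inter> ?F = {}"
    using assms(2) by (force simp: composite_choice_def atomic_choice_def choice_consistent_iff)+
  moreover have "{S\<in>Pow (pfacts P). ?T \<subseteq> S \<and> S \<inter> ?F = {}} = {S\<in>Pow (pfacts P). agrees_with S \<kappa>}"
    by (auto simp: agrees_with_def)
  ultimately show ?thesis
    using prod_bernoulli_marginal[OF assms(1), of ?T ?F "prob P"]
    by (simp add: rho_c_def Bay_def selection_prob_def)
qed

lemma finite_belief_facts: "wf_calp P \<Longrightarrow> finite (belief_facts P)"
proof (rule finite_subset)
  show "belief_facts P \<subseteq> Sigma (domains P) (\<lambda>D. Pow (frame P D))"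
    by (auto simp: belief_facts_def)
  show "wf_calp P \<Longrightarrow> finite (Sigma (domains P) (\<lambda>D. Pow (frame P D)))"
    by (auto simp: wf_calp_def belief_domain_def)
qed

lemma finite_composite_choices:
  assumes "wf_calp P" "\<forall>\<kappa>\<in>K. composite_choice P \<kappa>"
  shows "finite K"
proof -
  have "{c. atomic_choice P c} \<subseteq>
      case_prod BayC ` (pfacts P \<times> UNIV) \<union> case_prod BelC ` belief_facts P"
  proof
    fix c assume "c \<in> {c. atomic_choice P c}"
    then show "c \<in> case_prod BayC ` (pfacts P \<times> UNIV) \<union> case_prod BelC ` belief_facts P"
      by (cases c) (auto simp: atomic_choice_def belief_facts_def image_iff)
  qed
  then have "finite {c. atomic_choice P c}"
    by (rule finite_subset)
      (use assms(1) finite_belief_facts[OF assms(1)] in \<open>simp add: wf_calp_def\<close>)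
  moreover have "K \<subseteq> Pow {c. atomic_choice P c}"
    using assms(2) by (auto simp: composite_choice_def)
  ultimately show ?thesis
    by (simp add: finite_subset)
qed

lemma finite_canon_Bel: "wf_calp P \<Longrightarrow> composite_choice P \<kappa> \<Longrightarrow> finite (canon (Bel \<kappa>))"
  using pins_in_domains choice_event_subset_frame
  by (fastforce simp: canon_Bel_eq belief_facts_def
      intro: finite_subset[OF _ finite_belief_facts])

lemma prod_canon_Bel_eq_prod_essential_beliefs:
  assumes "wf_calp P" "composite_choice P \<kappa>" "\<forall>D\<in>domains P. g (D, frame P D) = 1"
  shows "(\<Prod>x\<in>canon (Bel \<kappa>). g x) = (\<Prod>x\<in>essential_beliefs P \<kappa>. g x)"
proof (rule prod.mono_neutral_right[OF finite_canon_Bel[OF assms(1,2)]])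
  show "essential_beliefs P \<kappa> \<subseteq> canon (Bel \<kappa>)"
    by (auto simp: essential_beliefs_def canon_Bel_eq)
  show "\<forall>x\<in>canon (Bel \<kappa>) - essential_beliefs P \<kappa>. g x = 1"
    using assms(3) pins_in_domains[OF assms(2)] by (auto simp: essential_beliefs_def canon_Bel_eq)
qed

lemma sum_rho_c_prod_canon_Bel_eq_sum_selections:
  fixes g :: "'d \<times> 'x set \<Rightarrow> real"
  assumes wf: "wf_calp P" and K: "\<forall>\<kappa>\<in>K. composite_choice P \<kappa>"
    and g: "\<forall>D\<in>domains P. g (D, frame P D) = 1"
  shows "(\<Sum>\<kappa>\<in>K. rho_c P \<kappa> * (\<Prod>x\<in>canon (Bel \<kappa>). g x)) =
    (\<Sum>S\<in>Pow (pfacts P). selection_prob P S *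
       (\<Sum>\<kappa>\<in>{\<kappa>\<in>K. agrees_with S \<kappa>}. \<Prod>x\<in>essential_beliefs P \<kappa>. g x))"
proof -
  have finK: "finite K" by (rule finite_composite_choices[OF wf K])
  have finF: "finite (pfacts P)" using wf by (simp add: wf_calp_def)
  have "(\<Sum>\<kappa>\<in>K. rho_c P \<kappa> * (\<Prod>x\<in>canon (Bel \<kappa>). g x)) =
    (\<Sum>\<kappa>\<in>K. \<Sum>S\<in>Pow (pfacts P).
       if agrees_with S \<kappa> then selection_prob P S * (\<Prod>x\<in>essential_beliefs P \<kappa>. g x) else 0)"
  proof (rule sum.cong[OF refl])
    fix \<kappa> assume "\<kappa> \<in> K"
    then have c: "composite_choice P \<kappa>" using K by auto
    show "rho_c P \<kappa> * (\<Prod>x\<in>canon (Bel \<kappa>). g x) = (\<Sum>S\<in>Pow (pfacts P).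
        if agrees_with S \<kappa> then selection_prob P S * (\<Prod>x\<in>essential_beliefs P \<kappa>. g x) else 0)"
      unfolding rho_c_eq_sum_selection_prob[OF finF c]
        prod_canon_Bel_eq_prod_essential_beliefs[OF wf c g] sum_distrib_right
      using finF by (simp add: sum.inter_filter[symmetric])
  qed
  also have "\<dots> = (\<Sum>S\<in>Pow (pfacts P). \<Sum>\<kappa>\<in>K.
       if agrees_with S \<kappa> then selection_prob P S * (\<Prod>x\<in>essential_beliefs P \<kappa>. g x) else 0)"
    by (rule sum.swap)
  also have "\<dots> = (\<Sum>S\<in>Pow (pfacts P). selection_prob P S *
       (\<Sum>\<kappa>\<in>{\<kappa>\<in>K. agrees_with S \<kappa>}. \<Prod>x\<in>essential_beliefs P \<kappa>. g x))"
    using finK by (simp add: sum.inter_filter[symmetric] sum_distrib_left)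
  finally show ?thesis .
qed

lemma sum_prod_essential_beliefs_eq:
  assumes wf: "wf_calp P"
    and K1: "\<forall>\<kappa>\<in>K1. composite_choice P \<kappa>" and K2: "\<forall>\<kappa>\<in>K2. composite_choice P \<kappa>"
    and pw1: "pairwise_incompatible K1" and pw2: "pairwise_incompatible K2"
    and eq: "omega_set P K1 = omega_set P K2" and S: "S \<subseteq> pfacts P"
  shows "(\<Sum>\<kappa>\<in>{\<kappa>\<in>K1. agrees_with S \<kappa>}. \<Prod>x\<in>essential_beliefs P \<kappa>. g x) =
    (\<Sum>\<kappa>\<in>{\<kappa>\<in>K2. agrees_with S \<kappa>}. \<Prod>x\<in>essential_beliefs P \<kappa>. g x)"
proof -
  have "(\<Sum>\<kappa>\<in>{\<kappa>\<in>K1. agrees_with S \<kappa>}. \<Prod>x\<in>essential_beliefs P \<kappa>. g x) =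
      (\<Sum>E\<in>essential_beliefs P ` {\<kappa>\<in>K1. agrees_with S \<kappa>}. \<Prod>x\<in>E. g x)"
    by (simp add: sum.reindex[OF inj_on_essential_beliefs[OF pw1 K1]])
  also have "\<dots> = (\<Sum>E\<in>essential_beliefs P ` {\<kappa>\<in>K2. agrees_with S \<kappa>}. \<Prod>x\<in>E. g x)"
    by (simp only: essential_beliefs_image_eq[OF wf K1 K2 pw1 pw2 eq S])
  also have "\<dots> = (\<Sum>\<kappa>\<in>{\<kappa>\<in>K2. agrees_with S \<kappa>}. \<Prod>x\<in>essential_beliefs P \<kappa>. g x)"
    by (simp add: sum.reindex[OF inj_on_essential_beliefs[OF pw2 K2]])
  finally show ?thesis .
qed

lemma sum_rho_c_prod_canon_Bel_invariant:
  fixes g :: "'d \<times> 'x set \<Rightarrow> real"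
  assumes wf: "wf_calp P"
    and K1: "\<forall>\<kappa>\<in>K1. composite_choice P \<kappa>" and K2: "\<forall>\<kappa>\<in>K2. composite_choice P \<kappa>"
    and pw1: "pairwise_incompatible K1" and pw2: "pairwise_incompatible K2"
    and eq: "omega_set P K1 = omega_set P K2"
    and g: "\<forall>D\<in>domains P. g (D, frame P D) = 1"
  shows "(\<Sum>\<kappa>\<in>K1. rho_c P \<kappa> * (\<Prod>x\<in>canon (Bel \<kappa>). g x)) =
    (\<Sum>\<kappa>\<in>K2. rho_c P \<kappa> * (\<Prod>x\<in>canon (Bel \<kappa>). g x))"
  unfolding sum_rho_c_prod_canon_Bel_eq_sum_selections[OF wf K1 g]
    sum_rho_c_prod_canon_Bel_eq_sum_selections[OF wf K2 g]
  using sum_prod_essential_beliefs_eq[OF wf K1 K2 pw1 pw2 eq] by (intro sum.cong) auto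

lemma Belief_frame: "wf_calp P \<Longrightarrow> D \<in> domains P \<Longrightarrow> Belief P D (frame P D) = 1"
  by (auto simp: wf_calp_def belief_domain_def Belief_def)

lemma Plaus_frame: "wf_calp P \<Longrightarrow> D \<in> domains P \<Longrightarrow> Plaus P D (frame P D) = 1"
  by (auto simp: wf_calp_def belief_domain_def Belief_def Plaus_def)

lemma xi_c_eq:
  "xi_c P K =
    ((\<Sum>\<kappa>\<in>K. rho_c P \<kappa> * (\<Prod>x\<in>canon (Bel \<kappa>). case x of (D, E) \<Rightarrow> Belief P D E)),
     (\<Sum>\<kappa>\<in>K. rho_c P \<kappa> * (\<Prod>x\<in>canon (Bel \<kappa>). case x of (D, E) \<Rightarrow> Plaus P D E)))"
  by (simp add: xi_c_def isum_def rho_comp_def imult_def iprod_def case_prod_beta)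

theorem mainTheorem3:
  fixes P :: "('r, 'f, 'd, 'x) calp"
    and K1 K2 :: "('f, 'd, 'x) achoice set set"
  assumes "wf_calp P"
    and "\<forall>\<kappa>\<in>K1. composite_choice P \<kappa>"
    and "\<forall>\<kappa>\<in>K2. composite_choice P \<kappa>"
    and "pairwise_incompatible K1"
    and "pairwise_incompatible K2"
    and "omega_set P K1 = omega_set P K2"
  shows "xi_c P K1 = xi_c P K2"
  unfolding xi_c_eq
  using sum_rho_c_prod_canon_Bel_invariant[OF assms, of "\<lambda>(D, E). Belief P D E"]
    sum_rho_c_prod_canon_Bel_invariant[OF assms, of "\<lambda>(D, E). Plaus P D E"]
    Belief_frame[OF assms(1)] Plaus_frame[OF assms(1)]
  by simp

end
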